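(* Consider $N$ heterogeneous agents $x_i(k+1)=A_ix_i(k)+B_iu_i(k)$, $y_i(k)=C_ix_i(k)\in\mathbb{R}^p$, with local measurements $z_i(k)=C_i^mx_i(k)$, where for each $i$: $(A_i,B_i)$ stabilizable, $(C_i,A_i)$ detectable, $(C_i,A_i,B_i)$ right-invertible, $(C_i^m,A_i)$ detectable. Consider an exosystem $x_r(k+1)=A_rx_r(k)$, $y_r(k)=C_rx_r(k)$ with $(C_r,A_r)$ observable and all eigenvalues of $A_r$ in the closed unit disc. Let $(\check C_r,\check A_r,\check B_r)$ be a triple such that $\check x_r(k+1)=\check A_r\check x_r(k)$, $y_r(k)=\check C_r\check x_r(k)$ reproduces every output $y_r$ of the exosystem for a suitable initial condition, whose eigenvalues are those of $A_r$ together with possibly additional zeros, and which is invertible of uniform rank $n_q$ with no invariant zeros. Suppose for each $i$ a pre-compensator $\xi_i(k+1)=A_{i,h}\xi_i+B_{i,h}z_i+E_{i,h}v_i$, $u_i=C_{i,h}\xi_i+D_{i,h}v_i$ is given such that the interconnection reads $\bar x_i(k+1)=\check A_r\bar x_i(k)+\check B_r(v_i(k)+d_i(k))$, $y_i(k)=\check C_r\bar x_i(k)$, with $\omega_i(k+1)=A_{i,s}\omega_i(k)$, $d_i=C_{i,s}\omega_i$, $A_{i,s}$ Schur stable. Let $K,H$ be such that $\check A_r-\check B_rK$ and $\check A_r-H\check C_r$ are Schur stable, and apply the protocol $$\begin{aligned}\xi_i(k+1)&=A_{i,h}\xi_i(k)+B_{i,h}z_i(k)-E_{i,h}K\eta_i(k),\\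 \hat x_i(k+1)&=\check A_r\hat x_i(k)+H(\bar\zeta_i(k)-\check C_r\hat x_i(k))-\check B_rK\check\zeta_i(k),\\ \eta_i(k+1)&=(\check A_r-\check B_rK)\eta_i(k)+\check A_r\hat x_i(k)-\check A_r\check\zeta_i(k),\\ u_i(k)&=C_{i,h}\xi_i(k)-D_{i,h}K\eta_i(k),\end{aligned}$$ where $\bar\zeta_i(k)=\frac{1}{2+d_{in}(i)}\big(\sum_{j}a_{ij}(y_i(k)-y_j(k))+\iota_i(y_i(k)-y_r(k))\big)$ and $\check\zeta_i(k)=\eta_i(k)-\sum_j\bar d_{ij}\eta_j(k)$. Then for any nonempty node set $\mathscr C$, any $N$, any graph in $\mathbb{G}^N_{\mathscr C}$, all initial conditions and all exosystem initial conditions $x_r(0)$, regulated output synchronization holds: $\lim_{k\to\infty}(y_i(k)-y_r(k))=0$ for all $i$.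
   Context: The network is a weighted directed graph on nodes $\{1,\dots,N\}$ with adjacency matrix $[a_{ij}]$, $a_{ij}\ge0$, $a_{ii}=0$ ($a_{ij}>0$ means an edge from $j$ to $i$), Laplacian $L$ ($\ell_{ii}=\sum_k a_{ik}$, $\ell_{ij}=-a_{ij}$), and $D_{in}=\operatorname{diag}\{d_{in}(i)\}$ with $d_{in}(i)=\sum_ja_{ij}$. A nonempty node set $\mathscr C$ (root set) consists of agents that receive $y_i-y_r$; $\iota_i=1$ if $i\in\mathscr C$ and $0$ otherwise. $\mathbb{G}^N_{\mathscr C}$ is the set of graphs on $N$ nodes such that every node is a member of a directed tree whose root lies in $\mathscr C$. $\bar L=L+\operatorname{diag}\{\iota_i\}$ and $\bar D=[\bar d_{ij}]=I-(2I+D_{in})^{-1}\bar L$. Schur stable means all eigenvalues in the open unit disc. *)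

theory Defs
  imports "Jordan_Normal_Form.Spectral_Radius"
begin

definition cmat :: "real mat \<Rightarrow> complex mat" where
  "cmat M = map_mat complex_of_real M"

definition schur_stable :: "real mat \<Rightarrow> bool" where
  "schur_stable M \<longleftrightarrow> M \<in> carrier_mat (dim_row M) (dim_row M) \<and>
     (\<forall>e. eigenvalue (cmat M) e \<longrightarrow> cmod e < 1)"

definition stabilizable :: "real mat \<Rightarrow> real mat \<Rightarrow> bool" where
  "stabilizable A B \<longleftrightarrow> (\<exists>F \<in> carrier_mat (dim_col B) (dim_row A). schur_stable (A + B * F))"

definition detectable :: "real mat \<Rightarrow> real mat \<Rightarrow> bool" where
  "detectable C A \<longleftrightarrow> (\<exists>L \<in> carrier_mat (dim_row A) (dim_row C). schur_stable (A + L * C))"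

definition observable :: "real mat \<Rightarrow> real mat \<Rightarrow> bool" where
  "observable C A \<longleftrightarrow> (\<forall>x \<in> carrier_vec (dim_row A).
     (\<forall>k < dim_row A. C *\<^sub>v ((A ^\<^sub>m k) *\<^sub>v x) = 0\<^sub>v (dim_row C)) \<longrightarrow> x = 0\<^sub>v (dim_row A))"

definition rosenbrock :: "real mat \<Rightarrow> real mat \<Rightarrow> real mat \<Rightarrow> complex \<Rightarrow> complex mat" where
  "rosenbrock C A B z = four_block_mat
      (z \<cdot>\<^sub>m 1\<^sub>m (dim_row A) - cmat A) (- cmat B)
      (cmat C) (0\<^sub>m (dim_row C) (dim_col B))"

definition full_row_rank :: "complex mat \<Rightarrow> bool" where
  "full_row_rank M \<longleftrightarrow> (\<forall>w \<in> carrier_vec (dim_row M).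
      transpose_mat M *\<^sub>v w = 0\<^sub>v (dim_col M) \<longrightarrow> w = 0\<^sub>v (dim_row M))"

text \<open>(C,A,B) right-invertible: the Rosenbrock matrix has full (row) normal rank n + p,
  i.e. full row rank for some z (equivalently the transfer matrix has normal rank p).\<close>
definition right_invertible :: "real mat \<Rightarrow> real mat \<Rightarrow> real mat \<Rightarrow> bool" where
  "right_invertible C A B \<longleftrightarrow> (\<exists>z. full_row_rank (rosenbrock C A B z))"

text \<open>(C,A,B) square (#inputs = #outputs), invertible (Rosenbrock matrix of full normal rank),
  and of uniform rank nq: C A^k B = 0 for k < nq - 1 and C A^(nq-1) B is invertible.\<close>
definition invertible_uniform_rank :: "real mat \<Rightarrow> real mat \<Rightarrow> real mat \<Rightarrow> nat \<Rightarrow> bool" where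
  "invertible_uniform_rank C A B nq \<longleftrightarrow> dim_col B = dim_row C \<and>
     (\<exists>z. det (rosenbrock C A B z) \<noteq> 0) \<and> 1 \<le> nq \<and>
     (\<forall>k < nq - 1. C * (A ^\<^sub>m k) * B = 0\<^sub>m (dim_row C) (dim_col B)) \<and>
     det (C * (A ^\<^sub>m (nq - 1)) * B) \<noteq> 0"

text \<open>For a square invertible system, z is an invariant zero iff the Rosenbrock matrix drops
  rank (below its full normal rank) at z, i.e. iff its determinant vanishes at z.\<close>
definition invariant_zero :: "real mat \<Rightarrow> real mat \<Rightarrow> real mat \<Rightarrow> complex \<Rightarrow> bool" where
  "invariant_zero C A B z \<longleftrightarrow> det (rosenbrock C A B z) = 0"

definition reproduces_outputs :: "real mat \<Rightarrow> real mat \<Rightarrow> real mat \<Rightarrow> real mat \<Rightarrow> bool" where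
  "reproduces_outputs Cc Ac Cr Ar \<longleftrightarrow> (\<forall>x0 \<in> carrier_vec (dim_row Ar).
     \<exists>x0' \<in> carrier_vec (dim_row Ac). \<forall>k. Cr *\<^sub>v ((Ar ^\<^sub>m k) *\<^sub>v x0) = Cc *\<^sub>v ((Ac ^\<^sub>m k) *\<^sub>v x0'))"

definition eigs_extend_by_zeros :: "real mat \<Rightarrow> real mat \<Rightarrow> bool" where
  "eigs_extend_by_zeros Ac Ar \<longleftrightarrow>
     (\<forall>e. eigenvalue (cmat Ar) e \<longrightarrow> eigenvalue (cmat Ac) e) \<and>
     (\<forall>e. eigenvalue (cmat Ac) e \<longrightarrow> eigenvalue (cmat Ar) e \<or> e = 0)"

text \<open>The interconnection "reads"
  xb(k+1) = Ac xb + Bc (v + d), y = Cc xb, w(k+1) = As w, d = Cs w: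
  every trajectory of the interconnection (for every input v) is matched by such xb, w.\<close>
definition interconnection_form ::
  "real mat \<Rightarrow> real mat \<Rightarrow> real mat \<Rightarrow> real mat \<Rightarrow>
   real mat \<Rightarrow> real mat \<Rightarrow> real mat \<Rightarrow> real mat \<Rightarrow> real mat \<Rightarrow>
   real mat \<Rightarrow> real mat \<Rightarrow> real mat \<Rightarrow> real mat \<Rightarrow> real mat \<Rightarrow> bool" where
  "interconnection_form A B C Cm Ah Bh Eh Ch Dh Ac Bc Cc As Cs \<longleftrightarrow>
    (\<forall>(v :: nat \<Rightarrow> real vec) (x :: nat \<Rightarrow> real vec) (\<xi> :: nat \<Rightarrow> real vec).
       (\<forall>k. v k \<in> carrier_vec (dim_col Bc) \<and> x k \<in> carrier_vec (dim_row A) \<and>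
            \<xi> k \<in> carrier_vec (dim_row Ah)) \<longrightarrow>
       (\<forall>k. x (Suc k) = A *\<^sub>v x k + B *\<^sub>v (Ch *\<^sub>v \<xi> k + Dh *\<^sub>v v k) \<and>
            \<xi> (Suc k) = Ah *\<^sub>v \<xi> k + Bh *\<^sub>v (Cm *\<^sub>v x k) + Eh *\<^sub>v v k) \<longrightarrow>
       (\<exists>(xb :: nat \<Rightarrow> real vec) (w :: nat \<Rightarrow> real vec). \<forall>k.
            xb k \<in> carrier_vec (dim_row Ac) \<and> w k \<in> carrier_vec (dim_row As) \<and>
            xb (Suc k) = Ac *\<^sub>v xb k + Bc *\<^sub>v (v k + Cs *\<^sub>v w k) \<and>
            w (Suc k) = As *\<^sub>v w k \<and>
            C *\<^sub>v x k = Cc *\<^sub>v xb k))"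

section \<open>Network (nodes 0..N-1; a i j > 0 means an edge from j to i)\<close>

definition weights_ok :: "nat \<Rightarrow> (nat \<Rightarrow> nat \<Rightarrow> real) \<Rightarrow> bool" where
  "weights_ok N a \<longleftrightarrow> (\<forall>i<N. \<forall>j<N. a i j \<ge> 0) \<and> (\<forall>i<N. a i i = 0)"

definition edge :: "nat \<Rightarrow> (nat \<Rightarrow> nat \<Rightarrow> real) \<Rightarrow> nat \<Rightarrow> nat \<Rightarrow> bool" where
  "edge N a j i \<longleftrightarrow> j < N \<and> i < N \<and> a i j > 0"

text \<open>Graph in G^N_C: every node lies in a directed tree rooted in C,
  i.e. every node is reachable by a directed path from some root in C.\<close>
definition in_graph_set :: "nat \<Rightarrow> nat set \<Rightarrow> (nat \<Rightarrow> nat \<Rightarrow> real) \<Rightarrow> bool" where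
  "in_graph_set N Cr a \<longleftrightarrow> weights_ok N a \<and> Cr \<subseteq> {..<N} \<and>
     (\<forall>i<N. \<exists>c\<in>Cr. (edge N a)\<^sup>*\<^sup>* c i)"

definition din :: "nat \<Rightarrow> (nat \<Rightarrow> nat \<Rightarrow> real) \<Rightarrow> nat \<Rightarrow> real" where
  "din N a i = (\<Sum>j<N. a i j)"

definition iota :: "nat set \<Rightarrow> nat \<Rightarrow> real" where
  "iota Cr i = (if i \<in> Cr then 1 else 0)"

text \<open>Entries of Lbar = L + diag(iota).\<close>
definition Lbar :: "nat \<Rightarrow> nat set \<Rightarrow> (nat \<Rightarrow> nat \<Rightarrow> real) \<Rightarrow> nat \<Rightarrow> nat \<Rightarrow> real" where
  "Lbar N Cr a i j = (if i = j then din N a i + iota Cr i else - a i j)"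

definition Dbar :: "nat \<Rightarrow> nat set \<Rightarrow> (nat \<Rightarrow> nat \<Rightarrow> real) \<Rightarrow> nat \<Rightarrow> nat \<Rightarrow> real" where
  "Dbar N Cr a i j = (if i = j then 1 else 0) - Lbar N Cr a i j / (2 + din N a i)"

definition zeta_bar :: "nat \<Rightarrow> nat set \<Rightarrow> (nat \<Rightarrow> nat \<Rightarrow> real) \<Rightarrow> nat \<Rightarrow>
    (nat \<Rightarrow> real vec) \<Rightarrow> real vec \<Rightarrow> nat \<Rightarrow> real vec" where
  "zeta_bar N Cr a p y yr i = vec p (\<lambda>l.
      ((\<Sum>j<N. a i j * (y i $ l - y j $ l)) + iota Cr i * (y i $ l - yr $ l)) / (2 + din N a i))"

definition zeta_check :: "nat \<Rightarrow> nat set \<Rightarrow> (nat \<Rightarrow> nat \<Rightarrow> real) \<Rightarrow> nat \<Rightarrow>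
    (nat \<Rightarrow> real vec) \<Rightarrow> nat \<Rightarrow> real vec" where
  "zeta_check N Cr a n eta i = vec n (\<lambda>l. eta i $ l - (\<Sum>j<N. Dbar N Cr a i j * eta j $ l))"

end

theory Submission
  imports Defs
begin

text \<open>The pre-compensators turn every agent into a copy of the internal model (Ac, Bc, Cc) driven
  by a vanishing matched disturbance, and the exosystem output is reproduced by the same model.
  In these coordinates three errors satisfy linear recursions with vanishing inputs: the observer
  error with transition matrix Ac - H Cc, the disagreement between tracking error and eta with the
  Kronecker product of Dbar and Ac, and the tracking error with Ac - Bc K. The first and the last
  are Schur stable by assumption. Dbar is substochastic, the roots lose mass in every step and
  every node is reachable from a root, so the powers of Dbar decay geometrically; since the
  eigenvalues of Ac lie in the closed unit disc, the powers of the Kronecker product still decay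
  geometrically. A linear recursion whose powers decay geometrically and whose input vanishes
  tends to zero, which yields the three limits in turn.\<close>

lemma contraction_tendsto_zero:
  fixes s U :: "nat \<Rightarrow> real"
  assumes r: "0 \<le> r" "r < 1"
    and step: "\<And>k. \<bar>s (Suc k)\<bar> \<le> r * \<bar>s k\<bar> + U k"
    and U: "U \<longlonglongrightarrow> 0"
  shows "s \<longlonglongrightarrow> 0"
proof (rule LIMSEQ_I)
  fix \<epsilon> :: real assume \<epsilon>: "\<epsilon> > 0"
  then obtain J where J: "\<And>k. k \<ge> J \<Longrightarrow> \<bar>U k\<bar> < \<epsilon> * (1 - r) / 2"
    using LIMSEQ_D[OF U, of "\<epsilon> * (1 - r) / 2"] r by auto
  have tail: "\<bar>s (J + t)\<bar> \<le> r ^ t * \<bar>s J\<bar> + \<epsilon> / 2" for t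
  proof (induction t)
    case (Suc t)
    have "\<bar>s (J + Suc t)\<bar> \<le> r * \<bar>s (J + t)\<bar> + U (J + t)"
      using step[of "J + t"] by simp
    also have "\<dots> \<le> r * (r ^ t * \<bar>s J\<bar> + \<epsilon> / 2) + \<epsilon> * (1 - r) / 2"
      using Suc r J[of "J + t"] by (intro add_mono mult_left_mono) auto
    also have "\<dots> = r ^ Suc t * \<bar>s J\<bar> + \<epsilon> / 2"
      by (simp add: field_simps)
    finally show ?case .
  qed (use \<epsilon> in simp)
  have "(\<lambda>t. r ^ t * \<bar>s J\<bar>) \<longlonglongrightarrow> 0"
    by (intro tendsto_mult_left_zero LIMSEQ_power_zero) (use r in auto)
  then obtain T where T: "\<And>t. t \<ge> T \<Longrightarrow> r ^ t * \<bar>s J\<bar> < \<epsilon> / 2"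
    using order_tendstoD(2)[of _ 0 sequentially "\<epsilon> / 2"] \<epsilon> by (auto simp: eventually_sequentially)
  show "\<exists>n0. \<forall>n\<ge>n0. norm (s n - 0) < \<epsilon>"
  proof (intro exI allI impI)
    fix n assume "n \<ge> J + T"
    then have "\<bar>s (J + (n - J))\<bar> < \<epsilon>"
      using tail[of "n - J"] T[of "n - J"] by linarith
    then show "norm (s n - 0) < \<epsilon>" using \<open>n \<ge> J + T\<close> by simp
  qed
qed

lemma geometric_convolution_tendsto_zero:
  fixes U :: "nat \<Rightarrow> real"
  assumes r: "0 \<le> r" "r < 1" and U: "U \<longlonglongrightarrow> 0"
  shows "(\<lambda>k. \<Sum>j<k. r ^ (k - Suc j) * U j) \<longlonglongrightarrow> 0"
proof (rule contraction_tendsto_zero[OF r])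
  show "(\<lambda>k. \<bar>U k\<bar>) \<longlonglongrightarrow> 0" using tendsto_rabs_zero[OF U] .
  fix k
  have "(\<Sum>j<k. r ^ (Suc k - Suc j) * U j) = r * (\<Sum>j<k. r ^ (k - Suc j) * U j)"
    unfolding sum_distrib_left
  proof (intro sum.cong refl)
    fix j assume "j \<in> {..<k}"
    then have "Suc k - Suc j = Suc (k - Suc j)" by auto
    then show "r ^ (Suc k - Suc j) * U j = r * (r ^ (k - Suc j) * U j)" by simp
  qed
  then have "(\<Sum>j<Suc k. r ^ (Suc k - Suc j) * U j) = r * (\<Sum>j<k. r ^ (k - Suc j) * U j) + U k"
    by simp
  then show "\<bar>\<Sum>j<Suc k. r ^ (Suc k - Suc j) * U j\<bar> \<le> r * \<bar>\<Sum>j<k. r ^ (k - Suc j) * U j\<bar> + \<bar>U k\<bar>"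
    using r abs_triangle_ineq[of "r * _" "U k"] by (simp add: abs_mult)
qed

lemma sum_mult_sum_swap:
  fixes f :: "'a \<Rightarrow> 'b::semiring_0"
  shows "(\<Sum>c\<in>I. f c * (\<Sum>j\<in>J. g j c)) = (\<Sum>j\<in>J. \<Sum>c\<in>I. f c * g j c)"
  unfolding sum_distrib_left by (rule sum.swap)

locale power_kernel =
  fixes I :: "'i set" and M :: "'i \<Rightarrow> 'i \<Rightarrow> real" and P :: "nat \<Rightarrow> 'i \<Rightarrow> 'i \<Rightarrow> real"
  assumes finite_I: "finite I"
    and P_0: "\<And>a b. a \<in> I \<Longrightarrow> b \<in> I \<Longrightarrow> P 0 a b = (if a = b then 1 else 0)"
    and P_Suc: "\<And>m a b. a \<in> I \<Longrightarrow> b \<in> I \<Longrightarrow> P (Suc m) a b = (\<Sum>c\<in>I. M a c * P m c b)"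
begin

lemma sum_P_0:
  assumes "a \<in> I" shows "(\<Sum>b\<in>I. P 0 a b * f b) = f a"
proof -
  have "(\<Sum>b\<in>I. P 0 a b * f b) = (\<Sum>b\<in>I. if a = b then f b else 0)"
    using assms by (intro sum.cong) (auto simp: P_0)
  then show ?thesis using assms finite_I by simp
qed

lemma sum_M_P:
  assumes "a \<in> I"
  shows "(\<Sum>c\<in>I. M a c * (\<Sum>b\<in>I. P m c b * f b)) = (\<Sum>b\<in>I. P (Suc m) a b * f b)"
proof -
  have "(\<Sum>c\<in>I. M a c * (\<Sum>b\<in>I. P m c b * f b)) = (\<Sum>b\<in>I. \<Sum>c\<in>I. M a c * (P m c b * f b))"
    unfolding sum_distrib_left by (rule sum.swap)
  also have "\<dots> = (\<Sum>b\<in>I. P (Suc m) a b * f b)"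
    using assms by (intro sum.cong) (simp_all add: P_Suc sum_distrib_right mult.assoc)
  finally show ?thesis .
qed

lemma recursion_solution:
  assumes dyn: "\<And>k a. a \<in> I \<Longrightarrow> z (Suc k) a = (\<Sum>c\<in>I. M a c * z k c) + u k a"
  shows "a \<in> I \<Longrightarrow> z k a = (\<Sum>b\<in>I. P k a b * z 0 b) + (\<Sum>j<k. \<Sum>b\<in>I. P (k - Suc j) a b * u j b)"
proof (induction k arbitrary: a)
  case 0
  then show ?case by (simp add: sum_P_0)
next
  case (Suc k)
  have shift: "(\<Sum>c\<in>I. M a c * (\<Sum>j<k. \<Sum>b\<in>I. P (k - Suc j) c b * u j b))
      = (\<Sum>j<k. \<Sum>b\<in>I. P (Suc k - Suc j) a b * u j b)"
  proof -
    have "(\<Sum>c\<in>I. M a c * (\<Sum>j<k. \<Sum>b\<in>I. P (k - Suc j) c b * u j b))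
        = (\<Sum>j<k. \<Sum>c\<in>I. M a c * (\<Sum>b\<in>I. P (k - Suc j) c b * u j b))"
      by (rule sum_mult_sum_swap)
    also have "\<dots> = (\<Sum>j<k. \<Sum>b\<in>I. P (Suc k - Suc j) a b * u j b)"
      by (rule sum.cong[OF refl]) (use Suc.prems in \<open>simp add: sum_M_P Suc_diff_Suc\<close>)
    finally show ?thesis .
  qed
  have "z (Suc k) a = (\<Sum>c\<in>I. M a c * z k c) + u k a"
    by (rule dyn[OF Suc.prems])
  also have "\<dots> = (\<Sum>c\<in>I. M a c * (\<Sum>b\<in>I. P k c b * z 0 b))
      + (\<Sum>c\<in>I. M a c * (\<Sum>j<k. \<Sum>b\<in>I. P (k - Suc j) c b * u j b)) + u k a"
    unfolding sum.distrib[symmetric] distrib_left[symmetric] using Suc.IH by (intro arg_cong2[where f = "(+)"] sum.cong) auto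
  also have "\<dots> = (\<Sum>b\<in>I. P (Suc k) a b * z 0 b)
      + (\<Sum>j<k. \<Sum>b\<in>I. P (Suc k - Suc j) a b * u j b) + (\<Sum>b\<in>I. P (Suc k - Suc k) a b * u k b)"
    unfolding sum_M_P[OF Suc.prems] shift diff_self_eq_0 sum_P_0[OF Suc.prems] ..
  finally show ?case by simp
qed

lemma recursion_tendsto_zero:
  assumes bound: "\<And>m a b. a \<in> I \<Longrightarrow> b \<in> I \<Longrightarrow> \<bar>P m a b\<bar> \<le> C * r ^ m"
    and r: "0 \<le> r" "r < 1"
    and dyn: "\<And>k a. a \<in> I \<Longrightarrow> z (Suc k) a = (\<Sum>c\<in>I. M a c * z k c) + u k a"
    and u: "\<And>b. b \<in> I \<Longrightarrow> (\<lambda>k. u k b) \<longlonglongrightarrow> 0"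
    and a: "a \<in> I"
  shows "(\<lambda>k. z k a) \<longlonglongrightarrow> 0"
proof -
  define U where "U j = (\<Sum>b\<in>I. \<bar>u j b\<bar>)" for j
  define g where "g k = C * r ^ k * (\<Sum>b\<in>I. \<bar>z 0 b\<bar>) + C * (\<Sum>j<k. r ^ (k - Suc j) * U j)" for k
  have apply_bound: "\<bar>\<Sum>b\<in>I. P m a b * f b\<bar> \<le> C * r ^ m * (\<Sum>b\<in>I. \<bar>f b\<bar>)" for m f
  proof -
    have "\<bar>\<Sum>b\<in>I. P m a b * f b\<bar> \<le> (\<Sum>b\<in>I. \<bar>P m a b\<bar> * \<bar>f b\<bar>)"
      unfolding abs_mult[symmetric] by (rule sum_abs)
    also have "\<dots> \<le> (\<Sum>b\<in>I. C * r ^ m * \<bar>f b\<bar>)"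
      using bound[OF a] by (intro sum_mono mult_right_mono) auto
    finally show ?thesis by (simp add: sum_distrib_left)
  qed
  have z_le_g: "\<bar>z k a\<bar> \<le> g k" for k
  proof -
    have "z k a = (\<Sum>b\<in>I. P k a b * z 0 b) + (\<Sum>j<k. \<Sum>b\<in>I. P (k - Suc j) a b * u j b)"
      by (rule recursion_solution[of z u a k, OF dyn a])
    then have "\<bar>z k a\<bar> \<le> \<bar>\<Sum>b\<in>I. P k a b * z 0 b\<bar> + \<bar>\<Sum>j<k. \<Sum>b\<in>I. P (k - Suc j) a b * u j b\<bar>"
      using abs_triangle_ineq by simp
    also have "\<dots> \<le> \<bar>\<Sum>b\<in>I. P k a b * z 0 b\<bar> + (\<Sum>j<k. \<bar>\<Sum>b\<in>I. P (k - Suc j) a b * u j b\<bar>)"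
      by (intro add_left_mono sum_abs)
    also have "\<dots> \<le> C * r ^ k * (\<Sum>b\<in>I. \<bar>z 0 b\<bar>) + (\<Sum>j<k. C * r ^ (k - Suc j) * U j)"
      unfolding U_def by (intro add_mono apply_bound sum_mono)
    finally show ?thesis unfolding g_def by (simp add: sum_distrib_left mult.assoc)
  qed
  have "U \<longlonglongrightarrow> 0"
    using tendsto_sum[of I "\<lambda>b j. \<bar>u j b\<bar>" "\<lambda>_. 0"] u unfolding U_def by (simp add: tendsto_rabs_zero)
  then have "g \<longlonglongrightarrow> 0"
    unfolding g_def using r
    by (intro tendsto_add_zero tendsto_mult_right_zero tendsto_mult_left_zero
        LIMSEQ_power_zero geometric_convolution_tendsto_zero) auto
  then show ?thesis
    by (rule tendsto_0_le[where K = 1]) (simp add: order_trans[OF z_le_g abs_ge_self])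
qed

end

lemma index_mult_mat_vec_sum:
  "A \<in> carrier_mat nr nc \<Longrightarrow> v \<in> carrier_vec nc \<Longrightarrow> i < nr \<Longrightarrow>
    (A *\<^sub>v v) $ i = (\<Sum>j<nc. A $$ (i, j) * v $ j)"
  by (auto simp: scalar_prod_def atLeast0LessThan intro!: sum.cong)

lemma index_mult_mat_sum:
  "A \<in> carrier_mat nr n \<Longrightarrow> B \<in> carrier_mat n nc \<Longrightarrow> i < nr \<Longrightarrow> j < nc \<Longrightarrow>
    (A * B) $$ (i, j) = (\<Sum>l<n. A $$ (i, l) * B $$ (l, j))"
  by (auto simp: scalar_prod_def atLeast0LessThan intro!: sum.cong)

lemma pow_mat_Suc_left:
  assumes "A \<in> carrier_mat n n"
  shows "A ^\<^sub>m Suc k = A * A ^\<^sub>m k"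
proof (induction k)
  case (Suc k)
  have "A ^\<^sub>m Suc (Suc k) = (A * A ^\<^sub>m k) * A" using Suc by simp
  also have "\<dots> = A * (A ^\<^sub>m k * A)" using assms by (intro assoc_mult_mat[of _ n n _ n _ n]) auto
  finally show ?case by simp
qed (use assms in simp)

lemma index_pow_mat_Suc:
  assumes A: "A \<in> carrier_mat n n" and "i < n" "j < n"
  shows "(A ^\<^sub>m Suc k) $$ (i, j) = (\<Sum>l<n. A $$ (i, l) * (A ^\<^sub>m k) $$ (l, j))"
  unfolding pow_mat_Suc_left[OF A] using assms by (intro index_mult_mat_sum[OF A]) auto

lemma smult_pow_mat:
  fixes A :: "'a::comm_semiring_1 mat"
  assumes A: "A \<in> carrier_mat n n"
  shows "(c \<cdot>\<^sub>m A) ^\<^sub>m k = c ^ k \<cdot>\<^sub>m A ^\<^sub>m k"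
proof (induction k)
  case (Suc k)
  have "(c \<cdot>\<^sub>m A) ^\<^sub>m Suc k = (c ^ k \<cdot>\<^sub>m A ^\<^sub>m k) * (c \<cdot>\<^sub>m A)" using Suc by simp
  also have "\<dots> = c ^ Suc k \<cdot>\<^sub>m (A ^\<^sub>m k * A)"
    using A by (intro eq_matI) (auto simp: algebra_simps)
  finally show ?case by simp
qed (use A in \<open>auto intro!: eq_matI\<close>)

lemma smult_mult_mat_vec:
  fixes A :: "'a::comm_ring mat"
  shows "A \<in> carrier_mat nr nc \<Longrightarrow> v \<in> carrier_vec nc \<Longrightarrow> (c \<cdot>\<^sub>m A) *\<^sub>v v = c \<cdot>\<^sub>v (A *\<^sub>v v)"
  by (intro eq_vecI) auto

lemma cmat_carrier [simp]: "M \<in> carrier_mat nr nc \<Longrightarrow> cmat M \<in> carrier_mat nr nc"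
  unfolding cmat_def by simp

lemma cmat_pow: "M \<in> carrier_mat n n \<Longrightarrow> cmat (M ^\<^sub>m k) = cmat M ^\<^sub>m k"
  unfolding cmat_def by (rule of_real_hom.mat_hom_pow)

text \<open>Scaling by 1/r reduces the claim to the uniform bound on the powers of a
  complex matrix of spectral radius below one.\<close>

lemma pow_mat_entries_geometric_bound:
  assumes M: "M \<in> carrier_mat n n" and r: "0 < r"
    and ev: "\<And>e. eigenvalue (cmat M) e \<Longrightarrow> cmod e < r"
  shows "\<exists>C. \<forall>k i j. i < n \<longrightarrow> j < n \<longrightarrow> \<bar>(M ^\<^sub>m k) $$ (i, j)\<bar> \<le> C * r ^ k"
proof (cases "n = 0")
  case False
  define B where "B = complex_of_real (1 / r) \<cdot>\<^sub>m cmat M"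
  have B: "B \<in> carrier_mat n n" unfolding B_def using M by simp
  have "spectral_radius B < 1"
  proof -
    obtain e where e: "eigenvalue B e" "spectral_radius B = cmod e"
      using spectral_radius_mem_max(1)[OF B] False unfolding spectrum_def by auto
    then obtain v where v: "v \<in> carrier_vec n" "v \<noteq> 0\<^sub>v n" "B *\<^sub>v v = e \<cdot>\<^sub>v v"
      unfolding eigenvalue_def eigenvector_def using B by auto
    have "cmat M *\<^sub>v v = complex_of_real r \<cdot>\<^sub>v (B *\<^sub>v v)"
      unfolding B_def smult_mult_mat_vec[OF cmat_carrier[OF M] v(1)] smult_smult_assoc
      using r by simp
    then have "eigenvalue (cmat M) (complex_of_real r * e)"
      unfolding eigenvalue_def eigenvector_def using M v
      by (intro exI[of _ v]) (auto simp: smult_smult_assoc cmat_def)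
    then have "cmod (complex_of_real r * e) < r" by (rule ev)
    then have "r * cmod e < r" using r by (simp add: norm_mult)
    then show ?thesis using e r by simp
  qed
  then obtain c where c: "\<And>k. norm_bound (B ^\<^sub>m k) c"
    using spectral_radius_jnf_norm_bound_less_1_upper_triangular[OF B] by auto
  have "\<bar>(M ^\<^sub>m k) $$ (i, j)\<bar> \<le> c * r ^ k" if "i < n" "j < n" for k i j
  proof -
    have "B ^\<^sub>m k = complex_of_real ((1 / r) ^ k) \<cdot>\<^sub>m cmat (M ^\<^sub>m k)"
      unfolding B_def smult_pow_mat[OF cmat_carrier[OF M]] cmat_pow[OF M] by simp
    then have norm_B: "norm ((B ^\<^sub>m k) $$ (i, j)) = (1 / r) ^ k * \<bar>(M ^\<^sub>m k) $$ (i, j)\<bar>"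
      using that M r by (simp add: cmat_def norm_mult norm_power norm_divide)
    have "\<bar>(M ^\<^sub>m k) $$ (i, j)\<bar> = (r * (1 / r)) ^ k * \<bar>(M ^\<^sub>m k) $$ (i, j)\<bar>"
      using r by simp
    also have "\<dots> = r ^ k * norm ((B ^\<^sub>m k) $$ (i, j))"
      unfolding norm_B by (simp only: power_mult_distrib mult.assoc)
    also have "\<dots> \<le> r ^ k * c"
      using c[of k] that B r unfolding norm_bound_def by (intro mult_left_mono) auto
    finally show ?thesis by (simp add: mult.commute)
  qed
  then show ?thesis by blast
qed auto

lemma schur_stable_pow_bound:
  assumes st: "schur_stable M" and M: "M \<in> carrier_mat n n"
  shows "\<exists>C r. 0 \<le> r \<and> r < 1 \<and> (\<forall>k i j. i < n \<longrightarrow> j < n \<longrightarrow> \<bar>(M ^\<^sub>m k) $$ (i, j)\<bar> \<le> C * r ^ k)"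
proof (cases "n = 0")
  case False
  have A: "cmat M \<in> carrier_mat n n" using M by simp
  define \<rho> where "\<rho> = spectral_radius (cmat M)"
  have \<rho>: "0 \<le> \<rho>" "\<rho> < 1"
    using spectral_radius_mem_max(1)[OF A] False st unfolding \<rho>_def schur_stable_def spectrum_def by auto
  have "cmod e < (1 + \<rho>) / 2" if "eigenvalue (cmat M) e" for e
    using spectral_radius_mem_max(2)[OF A, of "cmod e"] False that \<rho>
    unfolding \<rho>_def spectrum_def by auto
  moreover have "0 < (1 + \<rho>) / 2" "(1 + \<rho>) / 2 < 1" using \<rho> by auto
  ultimately show ?thesis using pow_mat_entries_geometric_bound[OF M] by (metis less_eq_real_def)
qed auto

definition tendsto_zero_vec :: "nat \<Rightarrow> (nat \<Rightarrow> real vec) \<Rightarrow> bool" where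
  "tendsto_zero_vec n v \<longleftrightarrow> (\<forall>l<n. (\<lambda>k. v k $ l) \<longlonglongrightarrow> 0)"

lemma tendsto_zero_vec_mult_mat_vec:
  assumes A: "A \<in> carrier_mat nr nc" and v: "\<And>k. v k \<in> carrier_vec nc"
    and lim: "tendsto_zero_vec nc v"
  shows "tendsto_zero_vec nr (\<lambda>k. A *\<^sub>v v k)"
  unfolding tendsto_zero_vec_def
proof (intro allI impI)
  fix l assume l: "l < nr"
  have "(\<lambda>k. \<Sum>j<nc. A $$ (l, j) * v k $ j) \<longlonglongrightarrow> (\<Sum>j<nc. A $$ (l, j) * 0)"
    using lim unfolding tendsto_zero_vec_def by (intro tendsto_intros) auto
  then show "(\<lambda>k. (A *\<^sub>v v k) $ l) \<longlonglongrightarrow> 0"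
    using index_mult_mat_vec_sum[OF A v l] by simp
qed

lemma tendsto_zero_vec_add:
  assumes "\<And>k. v k \<in> carrier_vec n" "tendsto_zero_vec n u" "tendsto_zero_vec n v"
  shows "tendsto_zero_vec n (\<lambda>k. u k + v k)"
  using assms(2,3) unfolding tendsto_zero_vec_def
  by (auto simp: assms(1)[THEN carrier_vecD] intro!: tendsto_add_zero)

lemma schur_stable_recursion_tendsto_zero:
  assumes M: "M \<in> carrier_mat n n" and st: "schur_stable M"
    and v: "\<And>k. v k \<in> carrier_vec n" and u: "\<And>k. u k \<in> carrier_vec n"
    and dyn: "\<And>k. v (Suc k) = M *\<^sub>v v k + u k"
    and lim: "tendsto_zero_vec n u"
  shows "tendsto_zero_vec n v"
proof -
  obtain C r where r: "0 \<le> r" "r < 1"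
    and bound: "\<And>k i j. i < n \<Longrightarrow> j < n \<Longrightarrow> \<bar>(M ^\<^sub>m k) $$ (i, j)\<bar> \<le> C * r ^ k"
    using schur_stable_pow_bound[OF st M] by blast
  interpret power_kernel "{..<n}" "\<lambda>a b. M $$ (a, b)" "\<lambda>m a b. (M ^\<^sub>m m) $$ (a, b)"
    using M by unfold_locales (auto simp del: pow_mat.simps(2) simp: index_pow_mat_Suc[OF M])
  show ?thesis
    unfolding tendsto_zero_vec_def
  proof (intro allI impI)
    fix l assume "l < n"
    show "(\<lambda>k. v k $ l) \<longlonglongrightarrow> 0"
      by (rule recursion_tendsto_zero[of C r "\<lambda>k a. v k $ a" "\<lambda>k a. u k $ a"])
        (use bound r lim \<open>l < n\<close> in
          \<open>auto simp: tendsto_zero_vec_def dyn index_mult_mat_vec_sum[OF M v] carrier_vecD[OF u]\<close>)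
  qed
qed

fun kernel_iter :: "nat \<Rightarrow> (nat \<Rightarrow> nat \<Rightarrow> real) \<Rightarrow> nat \<Rightarrow> (nat \<Rightarrow> real) \<Rightarrow> nat \<Rightarrow> real" where
  "kernel_iter N D 0 g i = g i"
| "kernel_iter N D (Suc m) g i = (\<Sum>l<N. D i l * kernel_iter N D m g l)"

definition kernel_pow :: "nat \<Rightarrow> (nat \<Rightarrow> nat \<Rightarrow> real) \<Rightarrow> nat \<Rightarrow> nat \<Rightarrow> nat \<Rightarrow> real" where
  "kernel_pow N D m i j = kernel_iter N D m (\<lambda>l. if l = j then 1 else 0) i"

lemma kernel_iter_add: "kernel_iter N D (m1 + m2) g i = kernel_iter N D m1 (kernel_iter N D m2 g) i"
  by (induction m1 arbitrary: i) auto

lemma kernel_iter_scale: "kernel_iter N D m (\<lambda>l. c * g l) i = c * kernel_iter N D m g i"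
  by (induction m arbitrary: i) (auto simp: sum_distrib_left algebra_simps)

locale substochastic =
  fixes N :: nat and D :: "nat \<Rightarrow> nat \<Rightarrow> real"
  assumes nonneg: "\<And>i j. i < N \<Longrightarrow> j < N \<Longrightarrow> 0 \<le> D i j"
    and row_sum_le_1: "\<And>i. i < N \<Longrightarrow> (\<Sum>j<N. D i j) \<le> 1"
begin

abbreviation mass :: "nat \<Rightarrow> nat \<Rightarrow> real" where
  "mass m i \<equiv> kernel_iter N D m (\<lambda>_. 1) i"

lemma kernel_iter_nonneg: "(\<And>l. l < N \<Longrightarrow> 0 \<le> g l) \<Longrightarrow> i < N \<Longrightarrow> 0 \<le> kernel_iter N D m g i"
  by (induction m arbitrary: i) (auto intro!: sum_nonneg mult_nonneg_nonneg nonneg)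

lemma kernel_iter_mono:
  "(\<And>l. l < N \<Longrightarrow> g l \<le> g' l) \<Longrightarrow> i < N \<Longrightarrow> kernel_iter N D m g i \<le> kernel_iter N D m g' i"
  by (induction m arbitrary: i) (auto intro!: sum_mono mult_left_mono nonneg)

lemma mass_le_1: "i < N \<Longrightarrow> mass m i \<le> 1"
proof (induction m arbitrary: i)
  case (Suc m)
  have "mass (Suc m) i \<le> (\<Sum>l<N. D i l * 1)"
    using Suc nonneg by (auto intro!: sum_mono mult_left_le)
  also have "\<dots> \<le> 1" using row_sum_le_1 Suc by simp
  finally show ?case .
qed simp

lemma mass_antimono:
  assumes "i < N" "m \<le> m'" shows "mass m' i \<le> mass m i"
proof -
  have "mass (Suc t) i \<le> mass t i" for t
  proof -
    have "mass (Suc t) i = kernel_iter N D t (mass 1) i"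
      unfolding Suc_eq_plus1 by (rule kernel_iter_add)
    also have "\<dots> \<le> mass t i"
      using mass_le_1 assms(1) by (intro kernel_iter_mono)
    finally show ?thesis .
  qed
  then show ?thesis using lift_Suc_antimono_le[of "\<lambda>t. mass t i"] assms(2) by blast
qed

lemma abs_kernel_pow_le_mass: "i < N \<Longrightarrow> j < N \<Longrightarrow> \<bar>kernel_pow N D m i j\<bar> \<le> mass m i"
  unfolding kernel_pow_def by (subst abs_of_nonneg) (auto intro!: kernel_iter_nonneg kernel_iter_mono)

lemma mass_Suc_less_1:
  assumes "i < N" "j < N" "0 < D i j" "mass t j < 1"
  shows "mass (Suc t) i < 1"
proof -
  have "mass (Suc t) i < (\<Sum>l<N. D i l * 1)"
    unfolding kernel_iter.simps
  proof (rule sum_strict_mono_ex1)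
    show "\<forall>l\<in>{..<N}. D i l * mass t l \<le> D i l * 1"
      using assms(1) mass_le_1 nonneg by (auto intro!: mult_left_le)
    show "\<exists>l\<in>{..<N}. D i l * mass t l < D i l * 1"
      using assms by (intro bexI[of _ j]) auto
  qed simp
  also have "\<dots> \<le> 1" using row_sum_le_1 assms(1) by simp
  finally show ?thesis .
qed

lemma mass_mult_le_power:
  assumes "\<And>i. i < N \<Longrightarrow> mass T i \<le> \<rho>" "0 \<le> \<rho>"
  shows "i < N \<Longrightarrow> mass (T * q) i \<le> \<rho> ^ q"
proof (induction q arbitrary: i)
  case (Suc q)
  have "mass (T * Suc q) i = kernel_iter N D T (mass (T * q)) i"
    using kernel_iter_add[of N D T "T * q"] by simp
  also have "\<dots> \<le> kernel_iter N D T (\<lambda>_. \<rho> ^ q * 1) i"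
    using Suc by (intro kernel_iter_mono) auto
  also have "\<dots> \<le> \<rho> ^ q * \<rho>"
    unfolding kernel_iter_scale using assms Suc.prems by (intro mult_left_mono) auto
  finally show ?case by (simp add: mult.commute)
qed simp

text \<open>Once every row has lost some mass after T steps, the mass decays like a geometric
  sequence with ratio the T-th root of the largest remaining row mass.\<close>

lemma kernel_pow_geometric_bound:
  assumes leak: "\<And>i. i < N \<Longrightarrow> \<exists>t. mass t i < 1"
  shows "\<exists>C \<sigma>. 0 \<le> \<sigma> \<and> \<sigma> < 1 \<and> (\<forall>m i j. i < N \<longrightarrow> j < N \<longrightarrow> \<bar>kernel_pow N D m i j\<bar> \<le> C * \<sigma> ^ m)"
proof (cases "N = 0")
  case False
  obtain t where t: "\<And>i. i < N \<Longrightarrow> mass (t i) i < 1" using leak by metis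
  define T where "T = Suc (\<Sum>i<N. t i)"
  have mass_T: "mass T i < 1" if "i < N" for i
    using mass_antimono[OF that, of "t i" T] t[OF that] member_le_sum[of i "{..<N}" t] that
    unfolding T_def by force
  define \<rho> where "\<rho> = max (1 / 2) (Max ((\<lambda>i. mass T i) ` {..<N}))"
  have "Max ((\<lambda>i. mass T i) ` {..<N}) < 1"
    using False mass_T by (subst Max_less_iff) auto
  then have \<rho>: "0 < \<rho>" "\<rho> < 1" unfolding \<rho>_def by auto
  have mass_T_le: "mass T i \<le> \<rho>" if "i < N" for i
    unfolding \<rho>_def using that by (intro max.coboundedI2 Max_ge) auto
  define \<sigma> where "\<sigma> = root T \<rho>"
  have "0 < T" unfolding T_def by simp
  then have \<sigma>: "\<sigma> ^ T = \<rho>" "0 < \<sigma>" "\<sigma> < 1"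
    unfolding \<sigma>_def using \<rho> by (simp_all add: real_root_pow_pos2 real_root_lt_1_iff)
  have "\<bar>kernel_pow N D m i j\<bar> \<le> 1 / \<rho> * \<sigma> ^ m" if "i < N" "j < N" for m i j
  proof -
    have m: "T * (m div T) \<le> m" "m \<le> T * Suc (m div T)"
      using times_div_less_eq_dividend[of T m] dividend_less_times_div[OF \<open>0 < T\<close>, of m]
      by simp_all
    have "\<bar>kernel_pow N D m i j\<bar> \<le> mass (T * (m div T)) i"
      using abs_kernel_pow_le_mass[OF that, of m] mass_antimono[OF that(1) m(1)] by linarith
    also have "\<dots> \<le> \<rho> ^ (m div T)"
      using mass_mult_le_power[OF mass_T_le] \<rho> that by auto
    also have "\<dots> = 1 / \<rho> * \<sigma> ^ (T * Suc (m div T))"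
      using \<rho> unfolding power_mult \<sigma>(1) by simp
    also have "\<dots> \<le> 1 / \<rho> * \<sigma> ^ m"
      using \<rho> \<sigma> m(2) by (intro mult_left_mono power_decreasing) auto
    finally show ?thesis .
  qed
  then show ?thesis using \<sigma> by (intro exI[of _ "1 / \<rho>"] exI[of _ \<sigma>]) auto
qed auto

end

lemma din_nonneg: "weights_ok N a \<Longrightarrow> i < N \<Longrightarrow> 0 \<le> din N a i"
  unfolding din_def weights_ok_def by (auto intro!: sum_nonneg)

lemma Dbar_row_sum:
  assumes "weights_ok N a" "i < N"
  shows "(\<Sum>j<N. Dbar N R a i j) = 1 - iota R i / (2 + din N a i)"
proof -
  have "(\<Sum>j<N. Lbar N R a i j) = (\<Sum>j<N. (if i = j then din N a i + iota R i else 0) - a i j)"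
    using assms by (intro sum.cong) (auto simp: Lbar_def weights_ok_def)
  then have "(\<Sum>j<N. Lbar N R a i j) = iota R i"
    using assms by (simp add: sum_subtractf din_def)
  then show ?thesis
    using assms unfolding Dbar_def by (simp add: sum_subtractf sum_divide_distrib[symmetric])
qed

lemma substochastic_Dbar:
  assumes a: "weights_ok N a"
  shows "substochastic N (Dbar N R a)"
proof
  fix i j assume ij: "i < N" "j < N"
  have "din N a i + iota R i \<le> 2 + din N a i" by (simp add: iota_def)
  then show "0 \<le> Dbar N R a i j"
    using a ij din_nonneg[OF a ij(1)] unfolding Dbar_def Lbar_def weights_ok_def
    by (auto simp: divide_le_eq_1)
next
  fix i assume "i < N"
  then show "(\<Sum>j<N. Dbar N R a i j) \<le> 1"
    using Dbar_row_sum[OF a] din_nonneg[OF a] by (simp add: iota_def)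
qed

text \<open>A root loses mass in one step (its row sum is below one), and mass loss propagates along
  edges; hence on a graph in which every node is reachable from a root, every row of some
  power of Dbar has sum below one.\<close>

lemma Dbar_pow_geometric_bound:
  assumes g: "in_graph_set N R a"
  shows "\<exists>C \<sigma>. 0 \<le> \<sigma> \<and> \<sigma> < 1 \<and>
    (\<forall>m i j. i < N \<longrightarrow> j < N \<longrightarrow> \<bar>kernel_pow N (Dbar N R a) m i j\<bar> \<le> C * \<sigma> ^ m)"
proof -
  have a: "weights_ok N a" and R: "R \<subseteq> {..<N}"
    and reach: "\<And>i. i < N \<Longrightarrow> \<exists>c\<in>R. (edge N a)\<^sup>*\<^sup>* c i"
    using g unfolding in_graph_set_def by auto
  interpret substochastic N "Dbar N R a" by (rule substochastic_Dbar[OF a])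
  have "\<exists>t. mass t i < 1" if i: "i < N" for i
  proof -
    obtain c where c: "c \<in> R" "(edge N a)\<^sup>*\<^sup>* c i" using reach[OF i] by blast
    from c(2) show ?thesis
    proof (induction rule: rtranclp_induct)
      case base
      have "c < N" using c R by auto
      then have "mass 1 c < 1"
        using Dbar_row_sum[OF a] c din_nonneg[OF a \<open>c < N\<close>] by (simp add: iota_def)
      then show ?case by blast
    next
      case (step y z)
      then obtain t where t: "mass t y < 1" by blast
      have e: "y < N" "z < N" "0 < a z y" "y \<noteq> z"
        using step(2) a unfolding edge_def weights_ok_def by auto
      then have "0 < Dbar N R a z y"
        using din_nonneg[OF a e(2)] unfolding Dbar_def Lbar_def by auto
      then show ?case using mass_Suc_less_1[OF e(2,1) _ t] by blast
    qed
  qed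
  then show ?thesis by (rule kernel_pow_geometric_bound)
qed

text \<open>The transition kernel of the network recursion is the Kronecker product of D and A, whose
  powers are products of powers; choosing s strictly between 1 and 1/sigma, the powers of A
  grow at most like s^m and the product still decays.\<close>

lemma network_recursion_tendsto_zero:
  fixes \<delta> f :: "nat \<Rightarrow> nat \<Rightarrow> real vec" and D :: "nat \<Rightarrow> nat \<Rightarrow> real"
  assumes A: "A \<in> carrier_mat n n"
    and A_ev: "\<And>e. eigenvalue (cmat A) e \<Longrightarrow> cmod e \<le> 1"
    and \<sigma>: "0 \<le> \<sigma>" "\<sigma> < 1"
    and D_bound: "\<And>m i j. i < N \<Longrightarrow> j < N \<Longrightarrow> \<bar>kernel_pow N D m i j\<bar> \<le> C * \<sigma> ^ m"
    and \<delta>: "\<And>i k. i < N \<Longrightarrow> \<delta> i k \<in> carrier_vec n"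
    and f: "\<And>i k. i < N \<Longrightarrow> f i k \<in> carrier_vec n"
    and dyn: "\<And>i k. i < N \<Longrightarrow> \<delta> i (Suc k) = A *\<^sub>v vec n (\<lambda>l. \<Sum>j<N. D i j * \<delta> j k $ l) + f i k"
    and f_lim: "\<And>i. i < N \<Longrightarrow> tendsto_zero_vec n (f i)"
    and i: "i < N"
  shows "tendsto_zero_vec n (\<delta> i)"
proof -
  define s where "s = 2 / (1 + \<sigma>)"
  have s: "1 < s" "0 \<le> \<sigma> * s" "\<sigma> * s < 1" unfolding s_def using \<sigma> by (auto simp: field_simps)
  obtain C' where C': "\<And>k l l'. l < n \<Longrightarrow> l' < n \<Longrightarrow> \<bar>(A ^\<^sub>m k) $$ (l, l')\<bar> \<le> C' * s ^ k"
    using pow_mat_entries_geometric_bound[OF A, of s] A_ev s(1) by fastforce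
  define I where "I = {..<N} \<times> {..<n}"
  interpret power_kernel I "\<lambda>p q. D (fst p) (fst q) * A $$ (snd p, snd q)"
    "\<lambda>m p q. kernel_pow N D m (fst p) (fst q) * (A ^\<^sub>m m) $$ (snd p, snd q)"
  proof
    show "finite I" unfolding I_def by simp
    show "kernel_pow N D 0 (fst p) (fst q) * (A ^\<^sub>m 0) $$ (snd p, snd q) = (if p = q then 1 else 0)"
      if "p \<in> I" "q \<in> I" for p q
      using that A unfolding I_def kernel_pow_def by (auto simp: prod_eq_iff)
    show "kernel_pow N D (Suc m) (fst p) (fst q) * (A ^\<^sub>m Suc m) $$ (snd p, snd q) =
        (\<Sum>c\<in>I. D (fst p) (fst c) * A $$ (snd p, snd c) *
          (kernel_pow N D m (fst c) (fst q) * (A ^\<^sub>m m) $$ (snd c, snd q)))"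
      if "p \<in> I" "q \<in> I" for m p q
    proof -
      have "snd p < n" "snd q < n" using that unfolding I_def by auto
      then have "kernel_pow N D (Suc m) (fst p) (fst q) * (A ^\<^sub>m Suc m) $$ (snd p, snd q) =
          (\<Sum>i<N. D (fst p) i * kernel_pow N D m i (fst q)) *
          (\<Sum>l<n. A $$ (snd p, l) * (A ^\<^sub>m m) $$ (l, snd q))"
        by (simp del: pow_mat.simps(2) add: kernel_pow_def index_pow_mat_Suc[OF A])
      also have "\<dots> = (\<Sum>i<N. \<Sum>l<n. D (fst p) i * A $$ (snd p, l) *
          (kernel_pow N D m i (fst q) * (A ^\<^sub>m m) $$ (l, snd q)))"
        by (simp add: sum_product mult_ac)
      finally show ?thesis unfolding I_def sum.cartesian_product' by simp
    qed
  qed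
  have "(\<lambda>k. \<delta> i k $ l) \<longlonglongrightarrow> 0" if l: "l < n" for l
  proof (rule recursion_tendsto_zero[of "C * C'" "\<sigma> * s" "\<lambda>k p. \<delta> (fst p) k $ snd p" "\<lambda>k p. f (fst p) k $ snd p" "(i, l)", simplified])
    show "\<bar>kernel_pow N D m (fst p) (fst q) * (A ^\<^sub>m m) $$ (snd p, snd q)\<bar> \<le> C * C' * (\<sigma> * s) ^ m"
      if "p \<in> I" "q \<in> I" for m p q
    proof -
      have D: "\<bar>kernel_pow N D m (fst p) (fst q)\<bar> \<le> C * \<sigma> ^ m"
        and A: "\<bar>(A ^\<^sub>m m) $$ (snd p, snd q)\<bar> \<le> C' * s ^ m"
        using that D_bound C' unfolding I_def by auto
      have "\<bar>kernel_pow N D m (fst p) (fst q)\<bar> * \<bar>(A ^\<^sub>m m) $$ (snd p, snd q)\<bar> \<le> (C * \<sigma> ^ m) * (C' * s ^ m)"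
        using order.trans[OF abs_ge_zero D] by (intro mult_mono[OF D A]) auto
      then show ?thesis by (simp add: abs_mult power_mult_distrib mult_ac)
    qed
    show "\<delta> (fst p) (Suc k) $ snd p = (\<Sum>c\<in>I. D (fst p) (fst c) * A $$ (snd p, snd c) * \<delta> (fst c) k $ snd c)
        + f (fst p) k $ snd p" if "p \<in> I" for k p
    proof -
      have p: "fst p < N" "snd p < n" using that unfolding I_def by auto
      have "\<delta> (fst p) (Suc k) $ snd p = (\<Sum>l<n. A $$ (snd p, l) * (\<Sum>j<N. D (fst p) j * \<delta> j k $ l))
          + f (fst p) k $ snd p"
        using p by (simp add: dyn index_mult_mat_vec_sum[OF A] carrier_vecD[OF f[OF p(1)]])
      also have "(\<Sum>l<n. A $$ (snd p, l) * (\<Sum>j<N. D (fst p) j * \<delta> j k $ l)) =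
          (\<Sum>j<N. \<Sum>l<n. D (fst p) j * A $$ (snd p, l) * \<delta> j k $ l)"
        by (simp add: sum_distrib_left sum.swap[of _ "{..<n}"] mult_ac)
      finally show ?thesis unfolding I_def sum.cartesian_product' by simp
    qed
    show "(\<lambda>k. f (fst p) k $ snd p) \<longlonglongrightarrow> 0" if "p \<in> I" for p
      using that f_lim unfolding I_def tendsto_zero_vec_def by auto
  qed (use s i l in \<open>auto simp: I_def\<close>)
  then show ?thesis unfolding tendsto_zero_vec_def by blast
qed

lemma dim_vec_zeta_check [simp]: "dim_vec (zeta_check N R a n X i) = n"
  unfolding zeta_check_def by simp

lemma zeta_check_carrier [simp]: "zeta_check N R a n X i \<in> carrier_vec n"
  unfolding zeta_check_def by simp

lemma index_zeta_check:
  "l < n \<Longrightarrow> zeta_check N R a n X i $ l = X i $ l - (\<Sum>j<N. Dbar N R a i j * X j $ l)"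
  unfolding zeta_check_def by simp

lemma zeta_check_cong:
  "(\<And>j. j < N \<Longrightarrow> X j = Y j) \<Longrightarrow> i < N \<Longrightarrow> zeta_check N R a n X i = zeta_check N R a n Y i"
  unfolding zeta_check_def by (intro eq_vecI) auto

lemma zeta_check_add:
  assumes X: "\<And>j. j < N \<Longrightarrow> X j \<in> carrier_vec n" and Y: "\<And>j. j < N \<Longrightarrow> Y j \<in> carrier_vec n"
    and i: "i < N"
  shows "zeta_check N R a n (\<lambda>j. X j + Y j) i = zeta_check N R a n X i + zeta_check N R a n Y i"
proof (rule eq_vecI)
  fix l assume "l < dim_vec (zeta_check N R a n X i + zeta_check N R a n Y i)"
  then have l: "l < n" by simp
  have "(\<Sum>j<N. Dbar N R a i j * (X j + Y j) $ l)
      = (\<Sum>j<N. Dbar N R a i j * X j $ l + Dbar N R a i j * Y j $ l)"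
    using l by (intro sum.cong) (auto simp: carrier_vecD[OF Y] distrib_left)
  then show "zeta_check N R a n (\<lambda>j. X j + Y j) i $ l = (zeta_check N R a n X i + zeta_check N R a n Y i) $ l"
    using i l by (simp add: index_zeta_check carrier_vecD[OF Y] sum.distrib)
qed simp

lemma zeta_check_diff:
  assumes X: "\<And>j. j < N \<Longrightarrow> X j \<in> carrier_vec n" and Y: "\<And>j. j < N \<Longrightarrow> Y j \<in> carrier_vec n"
    and i: "i < N"
  shows "zeta_check N R a n (\<lambda>j. X j - Y j) i = zeta_check N R a n X i - zeta_check N R a n Y i"
proof (rule eq_vecI)
  fix l assume "l < dim_vec (zeta_check N R a n X i - zeta_check N R a n Y i)"
  then have l: "l < n" by simp
  have "(\<Sum>j<N. Dbar N R a i j * (X j - Y j) $ l)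
      = (\<Sum>j<N. Dbar N R a i j * X j $ l - Dbar N R a i j * Y j $ l)"
    using l by (intro sum.cong) (auto simp: carrier_vecD[OF Y] right_diff_distrib)
  then show "zeta_check N R a n (\<lambda>j. X j - Y j) i $ l = (zeta_check N R a n X i - zeta_check N R a n Y i) $ l"
    using i l by (simp add: index_zeta_check carrier_vecD[OF Y] sum_subtractf)
qed simp

lemma mult_mat_vec_zeta_check:
  assumes M: "M \<in> carrier_mat nr n" and X: "\<And>j. j < N \<Longrightarrow> X j \<in> carrier_vec n" and i: "i < N"
  shows "M *\<^sub>v zeta_check N R a n X i = zeta_check N R a nr (\<lambda>j. M *\<^sub>v X j) i"
proof (rule eq_vecI)
  fix l assume "l < dim_vec (zeta_check N R a nr (\<lambda>j. M *\<^sub>v X j) i)"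
  then have l: "l < nr" by simp
  have "(\<Sum>t<n. M $$ (l, t) * (\<Sum>j<N. Dbar N R a i j * X j $ t))
      = (\<Sum>j<N. Dbar N R a i j * (\<Sum>t<n. M $$ (l, t) * X j $ t))"
    by (simp add: sum_distrib_left sum.swap[of _ "{..<n}"] mult_ac)
  also have "\<dots> = (\<Sum>j<N. Dbar N R a i j * (M *\<^sub>v X j) $ l)"
    using index_mult_mat_vec_sum[OF M X l] by (intro sum.cong) auto
  finally show "(M *\<^sub>v zeta_check N R a n X i) $ l = zeta_check N R a nr (\<lambda>j. M *\<^sub>v X j) i $ l"
    using l by (simp add: index_mult_mat_vec_sum[OF M _ l] index_mult_mat_vec_sum[OF M X[OF i] l]
        index_zeta_check right_diff_distrib sum_subtractf)
qed (use M in simp)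

lemma tendsto_zero_vec_zeta_check:
  assumes "\<And>j. j < N \<Longrightarrow> tendsto_zero_vec n (X j)" and "i < N"
  shows "tendsto_zero_vec n (\<lambda>k. zeta_check N R a n (\<lambda>j. X j k) i)"
  unfolding tendsto_zero_vec_def
proof (intro allI impI)
  fix l assume l: "l < n"
  have "(\<lambda>k. X i k $ l - (\<Sum>j<N. Dbar N R a i j * X j k $ l)) \<longlonglongrightarrow> 0 - (\<Sum>j<N. Dbar N R a i j * 0)"
    using assms l by (intro tendsto_intros) (auto simp: tendsto_zero_vec_def)
  then show "(\<lambda>k. zeta_check N R a n (\<lambda>j. X j k) i $ l) \<longlonglongrightarrow> 0"
    using l by (simp add: index_zeta_check)
qed

lemma vec_Dbar_sum_eq:
  "X i \<in> carrier_vec n \<Longrightarrow>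
    vec n (\<lambda>l. \<Sum>j<N. Dbar N R a i j * X j $ l) = X i - zeta_check N R a n X i"
  by (intro eq_vecI) (auto simp: index_zeta_check)

lemma Dbar_complement_sum:
  assumes a: "weights_ok N a" and i: "i < N"
  shows "Y i - (\<Sum>j<N. Dbar N R a i j * Y j)
    = ((\<Sum>j<N. a i j * (Y i - Y j)) + iota R i * Y i) / (2 + din N a i)"
proof -
  have "(\<Sum>j<N. Lbar N R a i j * Y j)
      = (\<Sum>j<N. (if i = j then (din N a i + iota R i) * Y j else 0) - a i j * Y j)"
    using a i by (intro sum.cong) (auto simp: Lbar_def weights_ok_def)
  also have "\<dots> = (din N a i + iota R i) * Y i - (\<Sum>j<N. a i j * Y j)"
    using i by (simp add: sum_subtractf)
  also have "\<dots> = (\<Sum>j<N. a i j * (Y i - Y j)) + iota R i * Y i"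
    by (simp add: din_def algebra_simps sum_subtractf sum_distrib_left)
  finally have L: "(\<Sum>j<N. Lbar N R a i j * Y j) = (\<Sum>j<N. a i j * (Y i - Y j)) + iota R i * Y i" .
  have "(\<Sum>j<N. Dbar N R a i j * Y j)
      = (\<Sum>j<N. (if i = j then Y j else 0) - Lbar N R a i j * Y j / (2 + din N a i))"
    by (intro sum.cong) (auto simp: Dbar_def left_diff_distrib)
  also have "\<dots> = Y i - (\<Sum>j<N. Lbar N R a i j * Y j) / (2 + din N a i)"
    using i by (simp add: sum_subtractf sum_divide_distrib)
  finally show ?thesis unfolding L by simp
qed

lemma zeta_bar_eq_zeta_check:
  assumes a: "weights_ok N a" and i: "i < N" and Cc: "Cc \<in> carrier_mat p n"
    and X: "\<And>j. j < N \<Longrightarrow> X j \<in> carrier_vec n" and yr: "yr \<in> carrier_vec p"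
    and y: "\<And>j. j < N \<Longrightarrow> y j = Cc *\<^sub>v X j + yr"
  shows "zeta_bar N R a p y yr i = Cc *\<^sub>v zeta_check N R a n X i"
proof (rule eq_vecI)
  fix l assume "l < dim_vec (Cc *\<^sub>v zeta_check N R a n X i)"
  then have l: "l < p" using Cc by simp
  define Y where "Y j = (Cc *\<^sub>v X j) $ l" for j
  have y_l: "y j $ l = Y j + yr $ l" if "j < N" for j
    using y[OF that] l yr Cc X[OF that] unfolding Y_def by simp
  have "(\<Sum>j<N. a i j * (y i $ l - y j $ l)) = (\<Sum>j<N. a i j * (Y i - Y j))"
    using i y_l by (intro sum.cong) auto
  then have "zeta_bar N R a p y yr i $ l = ((\<Sum>j<N. a i j * (Y i - Y j)) + iota R i * Y i) / (2 + din N a i)"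
    using l i y_l by (simp add: zeta_bar_def)
  also have "\<dots> = Y i - (\<Sum>j<N. Dbar N R a i j * Y j)"
    by (rule Dbar_complement_sum[OF a i, symmetric])
  also have "\<dots> = zeta_check N R a p (\<lambda>j. Cc *\<^sub>v X j) i $ l"
    using l by (simp add: index_zeta_check Y_def)
  also have "\<dots> = (Cc *\<^sub>v zeta_check N R a n X i) $ l"
    using Cc by (simp add: mult_mat_vec_zeta_check[OF Cc X i])
  finally show "zeta_bar N R a p y yr i $ l = (Cc *\<^sub>v zeta_check N R a n X i) $ l" .
qed (use Cc in \<open>simp add: zeta_bar_def\<close>)

lemma mult_add_distrib_mat_vec_dim:
  "dim_vec u = dim_col A \<Longrightarrow> dim_vec v = dim_col A \<Longrightarrow> A *\<^sub>v (u + v) = A *\<^sub>v u + A *\<^sub>v v"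
  by (rule mult_add_distrib_mat_vec[OF carrier_matI carrier_vecI carrier_vecI]) auto

lemma mult_minus_distrib_mat_vec_dim:
  fixes A :: "'a::comm_ring mat"
  shows "dim_vec u = dim_col A \<Longrightarrow> dim_vec v = dim_col A \<Longrightarrow> A *\<^sub>v (u - v) = A *\<^sub>v u - A *\<^sub>v v"
  by (rule mult_minus_distrib_mat_vec[OF carrier_matI carrier_vecI carrier_vecI]) auto

lemma minus_mult_distrib_mat_vec_dim:
  fixes A :: "'a::comm_ring mat"
  shows "dim_row A = dim_row B \<Longrightarrow> dim_col A = dim_col B \<Longrightarrow> dim_vec v = dim_col A \<Longrightarrow>
    (A - B) *\<^sub>v v = A *\<^sub>v v - B *\<^sub>v v"
  by (rule minus_mult_distrib_mat_vec[OF carrier_matI _ carrier_vecI]) auto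

lemma assoc_mult_mat_vec_dim:
  "dim_col A = dim_row B \<Longrightarrow> dim_vec v = dim_col B \<Longrightarrow> (A * B) *\<^sub>v v = A *\<^sub>v (B *\<^sub>v v)"
  by (rule assoc_mult_mat_vec[OF carrier_matI carrier_matI carrier_vecI]) auto

lemmas mult_mat_vec_distribs_dim =
  mult_add_distrib_mat_vec_dim mult_minus_distrib_mat_vec_dim
  minus_mult_distrib_mat_vec_dim assoc_mult_mat_vec_dim

definition internal_model_trajectory ::
  "real mat \<Rightarrow> real mat \<Rightarrow> real mat \<Rightarrow> real mat \<Rightarrow> (nat \<Rightarrow> real vec) \<Rightarrow> (nat \<Rightarrow> real vec) \<Rightarrow>
    (nat \<Rightarrow> real vec) \<Rightarrow> (nat \<Rightarrow> real vec) \<Rightarrow> bool" where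
  "internal_model_trajectory Ac Bc Cc K \<eta> y xb d \<longleftrightarrow>
    (\<forall>k. xb k \<in> carrier_vec (dim_row Ac) \<and> d k \<in> carrier_vec (dim_col Bc) \<and>
      xb (Suc k) = Ac *\<^sub>v xb k + Bc *\<^sub>v (d k - K *\<^sub>v \<eta> k) \<and> y k = Cc *\<^sub>v xb k) \<and>
    tendsto_zero_vec (dim_col Bc) d"

text \<open>The closed loop in the coordinates provided by the pre-compensators: xb i is the state of
  agent i in the internal model, with output y i and matched disturbance d i, and xc generates
  the reference output yr in the same model.\<close>

locale internal_model_network =
  fixes N :: nat and R :: "nat set" and a :: "nat \<Rightarrow> nat \<Rightarrow> real"
    and nr p :: nat and Ac Bc Cc K H :: "real mat"
    and xb \<eta> xh d y :: "nat \<Rightarrow> nat \<Rightarrow> real vec" and xc yr :: "nat \<Rightarrow> real vec"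
  assumes graph: "in_graph_set N R a"
    and Ac: "Ac \<in> carrier_mat nr nr" and Bc: "Bc \<in> carrier_mat nr p" and Cc: "Cc \<in> carrier_mat p nr"
    and K: "K \<in> carrier_mat p nr" and H: "H \<in> carrier_mat nr p"
    and Ac_eigs: "\<And>e. eigenvalue (cmat Ac) e \<Longrightarrow> cmod e \<le> 1"
    and K_stab: "schur_stable (Ac - Bc * K)" and H_stab: "schur_stable (Ac - H * Cc)"
    and agents: "\<And>i. i < N \<Longrightarrow> internal_model_trajectory Ac Bc Cc K (\<eta> i) (y i) (xb i) (d i)"
    and states: "\<And>i k. i < N \<Longrightarrow> \<eta> i k \<in> carrier_vec nr \<and> xh i k \<in> carrier_vec nr"
    and xc_carrier: "\<And>k. xc k \<in> carrier_vec nr"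
    and xc_dyn: "\<And>k. xc (Suc k) = Ac *\<^sub>v xc k"
    and yr: "\<And>k. yr k = Cc *\<^sub>v xc k"
    and xh_dyn: "\<And>i k. i < N \<Longrightarrow> xh i (Suc k) = Ac *\<^sub>v xh i k
        + H *\<^sub>v (zeta_bar N R a p (\<lambda>j. y j k) (yr k) i - Cc *\<^sub>v xh i k)
        - Bc *\<^sub>v (K *\<^sub>v zeta_check N R a nr (\<lambda>j. \<eta> j k) i)"
    and \<eta>_dyn: "\<And>i k. i < N \<Longrightarrow> \<eta> i (Suc k) = (Ac - Bc * K) *\<^sub>v \<eta> i k + Ac *\<^sub>v xh i k
        - Ac *\<^sub>v zeta_check N R a nr (\<lambda>j. \<eta> j k) i"
begin

lemma
  assumes i: "i < N"
  shows carrier: "xb i k \<in> carrier_vec nr \<and> \<eta> i k \<in> carrier_vec nr \<and> xh i k \<in> carrier_vec nr \<and>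
      d i k \<in> carrier_vec p"
    and d_lim: "tendsto_zero_vec p (d i)"
    and xb_dyn: "xb i (Suc k) = Ac *\<^sub>v xb i k + Bc *\<^sub>v (d i k - K *\<^sub>v \<eta> i k)"
    and y: "y i k = Cc *\<^sub>v xb i k"
  using agents[OF i] states[OF i] carrier_matD[OF Ac] carrier_matD[OF Bc]
  unfolding internal_model_trajectory_def by simp_all

definition tracking_error :: "nat \<Rightarrow> nat \<Rightarrow> real vec" where
  "tracking_error i k = xb i k - xc k"

abbreviation "X \<equiv> tracking_error"

definition observer_error :: "nat \<Rightarrow> nat \<Rightarrow> real vec" where
  "observer_error i k = zeta_check N R a nr (\<lambda>j. X j k) i - xh i k"

definition disagreement :: "nat \<Rightarrow> nat \<Rightarrow> real vec" where
  "disagreement i k = X i k - \<eta> i k"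

lemma X_carrier: "i < N \<Longrightarrow> X i k \<in> carrier_vec nr"
  unfolding tracking_error_def using carrier xc_carrier by simp

lemma dims:
  "dim_row Ac = nr" "dim_col Ac = nr" "dim_row Bc = nr" "dim_col Bc = p" "dim_row Cc = p"
  "dim_col Cc = nr" "dim_row K = p" "dim_col K = nr" "dim_row H = nr" "dim_col H = p"
  "\<And>k. dim_vec (xc k) = nr"
  "\<And>i k. i < N \<Longrightarrow> dim_vec (xb i k) = nr" "\<And>i k. i < N \<Longrightarrow> dim_vec (\<eta> i k) = nr"
  "\<And>i k. i < N \<Longrightarrow> dim_vec (xh i k) = nr" "\<And>i k. i < N \<Longrightarrow> dim_vec (d i k) = p"
  "\<And>i k. i < N \<Longrightarrow> dim_vec (X i k) = nr"
  using Ac Bc Cc K H carrier xc_carrier X_carrier by auto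

lemma X_dyn: "i < N \<Longrightarrow> X i (Suc k) = Ac *\<^sub>v X i k + Bc *\<^sub>v (d i k - K *\<^sub>v \<eta> i k)"
  unfolding tracking_error_def xb_dyn xc_dyn
  by (intro eq_vecI) (simp_all add: dims mult_mat_vec_distribs_dim)

lemma zeta_check_X_dyn:
  assumes i: "i < N"
  shows "zeta_check N R a nr (\<lambda>j. X j (Suc k)) i = Ac *\<^sub>v zeta_check N R a nr (\<lambda>j. X j k) i
    + Bc *\<^sub>v (zeta_check N R a p (\<lambda>j. d j k) i - K *\<^sub>v zeta_check N R a nr (\<lambda>j. \<eta> j k) i)"
proof -
  have c: "\<And>j. j < N \<Longrightarrow> X j k \<in> carrier_vec nr" "\<And>j. j < N \<Longrightarrow> \<eta> j k \<in> carrier_vec nr"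
    "\<And>j. j < N \<Longrightarrow> d j k \<in> carrier_vec p" using carrier X_carrier by auto
  have "zeta_check N R a nr (\<lambda>j. X j (Suc k)) i
      = zeta_check N R a nr (\<lambda>j. Ac *\<^sub>v X j k + Bc *\<^sub>v (d j k - K *\<^sub>v \<eta> j k)) i"
    using i by (intro zeta_check_cong) (simp_all add: X_dyn)
  also have "\<dots> = Ac *\<^sub>v zeta_check N R a nr (\<lambda>j. X j k) i
      + Bc *\<^sub>v zeta_check N R a p (\<lambda>j. d j k - K *\<^sub>v \<eta> j k) i"
    using c Ac Bc K i
    by (simp add: zeta_check_add mult_mat_vec_zeta_check)
  also have "zeta_check N R a p (\<lambda>j. d j k - K *\<^sub>v \<eta> j k) i
      = zeta_check N R a p (\<lambda>j. d j k) i - K *\<^sub>v zeta_check N R a nr (\<lambda>j. \<eta> j k) i"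
    using c K i by (simp add: zeta_check_diff mult_mat_vec_zeta_check)
  finally show ?thesis .
qed

lemma observer_error_tendsto_zero:
  assumes i: "i < N" shows "tendsto_zero_vec nr (observer_error i)"
proof (rule schur_stable_recursion_tendsto_zero[OF _ H_stab])
  show "Ac - H * Cc \<in> carrier_mat nr nr" using Ac by (simp add: minus_carrier_mat[OF mult_carrier_mat[OF H Cc]])
  show "observer_error i k \<in> carrier_vec nr" for k
    unfolding observer_error_def using carrier[OF i] by simp
  show "Bc *\<^sub>v zeta_check N R a p (\<lambda>j. d j k) i \<in> carrier_vec nr" for k using Bc by simp
  show "observer_error i (Suc k) = (Ac - H * Cc) *\<^sub>v observer_error i k + Bc *\<^sub>v zeta_check N R a p (\<lambda>j. d j k) i" for k
  proof -
    have "zeta_bar N R a p (\<lambda>j. y j k) (yr k) i = Cc *\<^sub>v zeta_check N R a nr (\<lambda>j. X j k) i"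
      using graph i X_carrier Cc xc_carrier
      by (intro zeta_bar_eq_zeta_check) (auto simp: in_graph_set_def y yr tracking_error_def
          mult_mat_vec_distribs_dim dims intro!: eq_vecI)
    then show ?thesis
      unfolding observer_error_def zeta_check_X_dyn[OF i] xh_dyn[OF i]
      by (intro eq_vecI) (simp_all add: dims i mult_mat_vec_distribs_dim)
  qed
  show "tendsto_zero_vec nr (\<lambda>k. Bc *\<^sub>v zeta_check N R a p (\<lambda>j. d j k) i)"
    by (rule tendsto_zero_vec_mult_mat_vec[OF Bc zeta_check_carrier tendsto_zero_vec_zeta_check[OF d_lim i]])
qed

lemma disagreement_tendsto_zero:
  assumes i: "i < N" shows "tendsto_zero_vec nr (disagreement i)"
proof -
  obtain C \<sigma> where \<sigma>: "0 \<le> \<sigma>" "\<sigma> < 1"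
    and bound: "\<And>m i j. i < N \<Longrightarrow> j < N \<Longrightarrow> \<bar>kernel_pow N (Dbar N R a) m i j\<bar> \<le> C * \<sigma> ^ m"
    using Dbar_pow_geometric_bound[OF graph] by blast
  have dyn: "disagreement i (Suc k) = Ac *\<^sub>v vec nr (\<lambda>l. \<Sum>j<N. Dbar N R a i j * disagreement j k $ l)
      + (Ac *\<^sub>v observer_error i k + Bc *\<^sub>v d i k)" if i: "i < N" for i k
  proof -
    have "vec nr (\<lambda>l. \<Sum>j<N. Dbar N R a i j * disagreement j k $ l)
        = (X i k - \<eta> i k) - (zeta_check N R a nr (\<lambda>j. X j k) i - zeta_check N R a nr (\<lambda>j. \<eta> j k) i)"
      using i carrier X_carrier unfolding disagreement_def
      by (simp add: vec_Dbar_sum_eq zeta_check_diff)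
    then show ?thesis
      unfolding disagreement_def observer_error_def X_dyn[OF i] \<eta>_dyn[OF i]
      by (intro eq_vecI) (simp_all add: dims i mult_mat_vec_distribs_dim)
  qed
  show ?thesis
  proof (rule network_recursion_tendsto_zero[where \<delta> = disagreement
        and f = "\<lambda>j k. Ac *\<^sub>v observer_error j k + Bc *\<^sub>v d j k", OF Ac Ac_eigs \<sigma> bound _ _ dyn _ i])
    show "disagreement j k \<in> carrier_vec nr" if "j < N" for j k
      unfolding disagreement_def using that carrier X_carrier by simp
    show "Ac *\<^sub>v observer_error j k + Bc *\<^sub>v d j k \<in> carrier_vec nr" for j k
      by (intro carrier_vecI) (simp add: dims)
    show "tendsto_zero_vec nr (\<lambda>k. Ac *\<^sub>v observer_error j k + Bc *\<^sub>v d j k)" if j: "j < N" for j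
    proof (rule tendsto_zero_vec_add)
      show "Bc *\<^sub>v d j k \<in> carrier_vec nr" for k by (intro carrier_vecI) (simp add: dims)
      show "tendsto_zero_vec nr (\<lambda>k. Ac *\<^sub>v observer_error j k)"
        by (rule tendsto_zero_vec_mult_mat_vec[OF Ac _ observer_error_tendsto_zero[OF j]])
          (intro carrier_vecI, simp add: observer_error_def dims j)
      show "tendsto_zero_vec nr (\<lambda>k. Bc *\<^sub>v d j k)"
        by (rule tendsto_zero_vec_mult_mat_vec[OF Bc _ d_lim[OF j]]) (intro carrier_vecI, simp add: dims j)
    qed
  qed
qed

lemma tracking_error_tendsto_zero:
  assumes i: "i < N" shows "tendsto_zero_vec nr (X i)"
proof (rule schur_stable_recursion_tendsto_zero[OF _ K_stab X_carrier[OF i]])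
  show "Ac - Bc * K \<in> carrier_mat nr nr" using Ac by (simp add: minus_carrier_mat[OF mult_carrier_mat[OF Bc K]])
  show "Bc *\<^sub>v (K *\<^sub>v disagreement i k + d i k) \<in> carrier_vec nr" for k
    by (intro carrier_vecI) (simp add: dims)
  show "X i (Suc k) = (Ac - Bc * K) *\<^sub>v X i k + Bc *\<^sub>v (K *\<^sub>v disagreement i k + d i k)" for k
    unfolding X_dyn[OF i] disagreement_def
    by (intro eq_vecI) (simp_all add: dims i mult_mat_vec_distribs_dim)
  have "tendsto_zero_vec p (\<lambda>k. K *\<^sub>v disagreement i k + d i k)"
  proof (rule tendsto_zero_vec_add)
    show "d i k \<in> carrier_vec p" for k by (intro carrier_vecI) (simp add: dims i)
    show "tendsto_zero_vec p (\<lambda>k. K *\<^sub>v disagreement i k)"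
      by (rule tendsto_zero_vec_mult_mat_vec[OF K _ disagreement_tendsto_zero[OF i]])
        (intro carrier_vecI, simp add: disagreement_def dims i)
  qed (rule d_lim[OF i])
  then show "tendsto_zero_vec nr (\<lambda>k. Bc *\<^sub>v (K *\<^sub>v disagreement i k + d i k))"
    by (rule tendsto_zero_vec_mult_mat_vec[OF Bc, rotated]) (intro carrier_vecI, simp add: dims i)
qed

lemma output_error_tendsto_zero:
  assumes i: "i < N" shows "tendsto_zero_vec p (\<lambda>k. y i k - yr k)"
proof -
  have "y i k - yr k = Cc *\<^sub>v X i k" for k
    unfolding y[OF i] yr tracking_error_def
    by (intro eq_vecI) (simp_all add: dims i mult_mat_vec_distribs_dim)
  then show ?thesis
    using tendsto_zero_vec_mult_mat_vec[OF Cc X_carrier[OF i] tracking_error_tendsto_zero[OF i]]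
    by simp
qed

end



lemma pow_mat_mult_vec_Suc:
  assumes "A \<in> carrier_mat n n" "v \<in> carrier_vec n"
  shows "A ^\<^sub>m Suc k *\<^sub>v v = A *\<^sub>v (A ^\<^sub>m k *\<^sub>v v)"
  unfolding pow_mat_Suc_left[OF assms(1)] using assms by (intro assoc_mult_mat_vec) auto

lemma linear_recursion_pow_mat:
  assumes A: "A \<in> carrier_mat n n" and x0: "x 0 \<in> carrier_vec n"
    and dyn: "\<And>k. x (Suc k) = A *\<^sub>v x k"
  shows "x k = A ^\<^sub>m k *\<^sub>v x 0"
  by (induction k) (use A x0 in \<open>simp_all del: pow_mat.simps(2) add: dyn pow_mat_mult_vec_Suc\<close>)

lemma reproduces_outputs_trajectory:
  assumes rep: "reproduces_outputs Cc Ac Cr Ar"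
    and Ar: "Ar \<in> carrier_mat nr0 nr0" and Ac: "Ac \<in> carrier_mat nr nr"
    and xr: "\<And>k. xr k \<in> carrier_vec nr0" and xr_dyn: "\<And>k. xr (Suc k) = Ar *\<^sub>v xr k"
  obtains xc where "\<And>k. xc k \<in> carrier_vec nr" "\<And>k. xc (Suc k) = Ac *\<^sub>v xc k"
    "\<And>k. Cr *\<^sub>v xr k = Cc *\<^sub>v xc k"
proof -
  have "xr 0 \<in> carrier_vec (dim_row Ar)" using xr Ar by simp
  then obtain x0 where x0: "x0 \<in> carrier_vec nr" "\<And>k. Cr *\<^sub>v (Ar ^\<^sub>m k *\<^sub>v xr 0) = Cc *\<^sub>v (Ac ^\<^sub>m k *\<^sub>v x0)"
    using rep Ac unfolding reproduces_outputs_def by auto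
  show thesis
  proof (rule that[of "\<lambda>k. Ac ^\<^sub>m k *\<^sub>v x0"])
    show "Ac ^\<^sub>m k *\<^sub>v x0 \<in> carrier_vec nr" for k
      by (rule mult_mat_vec_carrier[OF pow_carrier_mat[OF Ac] x0(1)])
    show "Ac ^\<^sub>m Suc k *\<^sub>v x0 = Ac *\<^sub>v (Ac ^\<^sub>m k *\<^sub>v x0)" for k
      by (rule pow_mat_mult_vec_Suc[OF Ac x0(1)])
    show "Cr *\<^sub>v xr k = Cc *\<^sub>v (Ac ^\<^sub>m k *\<^sub>v x0)" for k
    proof -
      have "xr k = Ar ^\<^sub>m k *\<^sub>v xr 0"
        by (rule linear_recursion_pow_mat[where x = xr, OF Ar xr xr_dyn])
      then show ?thesis using x0(2)[of k] by simp
    qed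
  qed
qed

lemma precompensated_agent_internal_model:
  assumes form: "interconnection_form A B C Cm Ah Bh Eh Ch Dh Ac Bc Cc As Cs"
    and A: "A \<in> carrier_mat n n" and Ah: "Ah \<in> carrier_mat h h"
    and Bh: "Bh \<in> carrier_mat h q" and Cm: "Cm \<in> carrier_mat q n" and Eh: "Eh \<in> carrier_mat h p"
    and Ch: "Ch \<in> carrier_mat m h" and Dh: "Dh \<in> carrier_mat m p"
    and As: "As \<in> carrier_mat ns ns" and Cs: "Cs \<in> carrier_mat p ns" and As_stab: "schur_stable As"
    and Ac: "Ac \<in> carrier_mat nr nr" and Bc: "Bc \<in> carrier_mat nr p" and K: "K \<in> carrier_mat p nr"
    and x: "\<And>k. x k \<in> carrier_vec n" and \<xi>: "\<And>k. \<xi> k \<in> carrier_vec h"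
    and \<eta>: "\<And>k. \<eta> k \<in> carrier_vec nr"
    and x_dyn: "\<And>k. x (Suc k) = A *\<^sub>v x k + B *\<^sub>v (Ch *\<^sub>v \<xi> k - Dh *\<^sub>v (K *\<^sub>v \<eta> k))"
    and \<xi>_dyn: "\<And>k. \<xi> (Suc k) = Ah *\<^sub>v \<xi> k + Bh *\<^sub>v (Cm *\<^sub>v x k) - Eh *\<^sub>v (K *\<^sub>v \<eta> k)"
  shows "\<exists>xb d. internal_model_trajectory Ac Bc Cc K \<eta> (\<lambda>k. C *\<^sub>v x k) xb d"
proof -
  have dims: "dim_row A = n" "dim_row Ah = h" "dim_row As = ns" "dim_row Ac = nr" "dim_col Bc = p"
    using A Ah As Ac Bc by auto
  define v where "v k = - (K *\<^sub>v \<eta> k)" for k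
  have v: "v k \<in> carrier_vec p" for k
    unfolding v_def using mult_mat_vec_carrier[OF K \<eta>] by simp
  have "Ch *\<^sub>v \<xi> k + Dh *\<^sub>v v k = Ch *\<^sub>v \<xi> k - Dh *\<^sub>v (K *\<^sub>v \<eta> k)"
    "Ah *\<^sub>v \<xi> k + Bh *\<^sub>v (Cm *\<^sub>v x k) + Eh *\<^sub>v v k
      = Ah *\<^sub>v \<xi> k + Bh *\<^sub>v (Cm *\<^sub>v x k) - Eh *\<^sub>v (K *\<^sub>v \<eta> k)" for k
    unfolding v_def using Ah Bh Ch Dh Eh K \<xi>[of k] \<eta>[of k] by (intro eq_vecI; simp)+
  then obtain xb w where xbw: "\<And>k. xb k \<in> carrier_vec nr \<and> w k \<in> carrier_vec ns \<and>
      xb (Suc k) = Ac *\<^sub>v xb k + Bc *\<^sub>v (v k + Cs *\<^sub>v w k) \<and> w (Suc k) = As *\<^sub>v w k \<and>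
      C *\<^sub>v x k = Cc *\<^sub>v xb k"
    using form[unfolded interconnection_form_def dims, rule_format, of v x \<xi>] v x \<xi> x_dyn \<xi>_dyn
    by (simp add: dims) blast
  have xb: "xb k \<in> carrier_vec nr" and w: "w k \<in> carrier_vec ns"
    and out: "C *\<^sub>v x k = Cc *\<^sub>v xb k" for k
    using xbw[of k] by simp_all
  have d: "Cs *\<^sub>v w k \<in> carrier_vec p" for k by (rule mult_mat_vec_carrier[OF Cs w])
  have "tendsto_zero_vec ns w"
  proof (rule schur_stable_recursion_tendsto_zero[OF As As_stab w])
    show "w (Suc k) = As *\<^sub>v w k + 0\<^sub>v ns" for k
      using xbw[of k] mult_mat_vec_carrier[OF As w] by simp
  qed (simp_all add: tendsto_zero_vec_def)
  then have d_lim: "tendsto_zero_vec p (\<lambda>k. Cs *\<^sub>v w k)" by (rule tendsto_zero_vec_mult_mat_vec[OF Cs w])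
  have xb_dyn: "xb (Suc k) = Ac *\<^sub>v xb k + Bc *\<^sub>v (Cs *\<^sub>v w k - K *\<^sub>v \<eta> k)" for k
  proof -
    have "v k + Cs *\<^sub>v w k = Cs *\<^sub>v w k - K *\<^sub>v \<eta> k"
      unfolding v_def using carrier_vecD[OF d[of k]] carrier_matD[OF K] carrier_matD[OF Cs]
      by (intro eq_vecI) simp_all
    then show ?thesis using xbw[of k] by simp
  qed
  have "internal_model_trajectory Ac Bc Cc K \<eta> (\<lambda>k. C *\<^sub>v x k) xb (\<lambda>k. Cs *\<^sub>v w k)"
    unfolding internal_model_trajectory_def dims using xb d xb_dyn out d_lim by simp
  then show ?thesis by blast
qed

theorem theorem4:
  fixes N p nr nr0 nq :: nat
    and n m q h ns :: "nat \<Rightarrow> nat"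
    and A B C Cm Ah Bh Eh Ch Dh As Cs :: "nat \<Rightarrow> real mat"
    and Ar Cr Ac Bc Cc K H :: "real mat"
    and roots :: "nat set" and a :: "nat \<Rightarrow> nat \<Rightarrow> real"
    and x \<xi> xh \<eta> :: "nat \<Rightarrow> nat \<Rightarrow> real vec" and xr :: "nat \<Rightarrow> real vec"
  assumes agent_dims: "\<And>i. i < N \<Longrightarrow>
      A i \<in> carrier_mat (n i) (n i) \<and> B i \<in> carrier_mat (n i) (m i) \<and>
      C i \<in> carrier_mat p (n i) \<and> Cm i \<in> carrier_mat (q i) (n i)"
    and agent_stabilizable: "\<And>i. i < N \<Longrightarrow> stabilizable (A i) (B i)"
    and agent_detectable: "\<And>i. i < N \<Longrightarrow> detectable (C i) (A i)"
    and agent_right_invertible: "\<And>i. i < N \<Longrightarrow> right_invertible (C i) (A i) (B i)"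
    and agent_meas_detectable: "\<And>i. i < N \<Longrightarrow> detectable (Cm i) (A i)"
    and exo_dims: "Ar \<in> carrier_mat nr0 nr0" "Cr \<in> carrier_mat p nr0"
    and exo_observable: "observable Cr Ar"
    and exo_eigs: "\<And>e. eigenvalue (cmat Ar) e \<Longrightarrow> cmod e \<le> 1"
    and chk_dims: "Ac \<in> carrier_mat nr nr" "Bc \<in> carrier_mat nr p" "Cc \<in> carrier_mat p nr"
    and chk_reproduces: "reproduces_outputs Cc Ac Cr Ar"
    and chk_eigs: "eigs_extend_by_zeros Ac Ar"
    and chk_uniform_rank: "invertible_uniform_rank Cc Ac Bc nq"
    and chk_no_zeros: "\<And>z. \<not> invariant_zero Cc Ac Bc z"
    and pre_dims: "\<And>i. i < N \<Longrightarrow>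
      Ah i \<in> carrier_mat (h i) (h i) \<and> Bh i \<in> carrier_mat (h i) (q i) \<and>
      Eh i \<in> carrier_mat (h i) p \<and> Ch i \<in> carrier_mat (m i) (h i) \<and>
      Dh i \<in> carrier_mat (m i) p \<and>
      As i \<in> carrier_mat (ns i) (ns i) \<and> Cs i \<in> carrier_mat p (ns i)"
    and pre_form: "\<And>i. i < N \<Longrightarrow>
      interconnection_form (A i) (B i) (C i) (Cm i) (Ah i) (Bh i) (Eh i) (Ch i) (Dh i)
        Ac Bc Cc (As i) (Cs i)"
    and pre_As_stable: "\<And>i. i < N \<Longrightarrow> schur_stable (As i)"
    and KH_dims: "K \<in> carrier_mat p nr" "H \<in> carrier_mat nr p"
    and K_stab: "schur_stable (Ac - Bc * K)"
    and H_stab: "schur_stable (Ac - H * Cc)"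
    and roots_nonempty: "roots \<noteq> {}"
    and graph: "in_graph_set N roots a"
    and traj_dims: "\<And>i k. i < N \<Longrightarrow>
      x i k \<in> carrier_vec (n i) \<and> \<xi> i k \<in> carrier_vec (h i) \<and>
      xh i k \<in> carrier_vec nr \<and> \<eta> i k \<in> carrier_vec nr"
    and exo_traj_dims: "\<And>k. xr k \<in> carrier_vec nr0"
    and exo_dyn: "\<And>k. xr (Suc k) = Ar *\<^sub>v xr k"
    and agent_dyn: "\<And>i k. i < N \<Longrightarrow>
      x i (Suc k) = A i *\<^sub>v x i k + B i *\<^sub>v (Ch i *\<^sub>v \<xi> i k - Dh i *\<^sub>v (K *\<^sub>v \<eta> i k))"
    and pre_dyn: "\<And>i k. i < N \<Longrightarrow>
      \<xi> i (Suc k) = Ah i *\<^sub>v \<xi> i k + Bh i *\<^sub>v (Cm i *\<^sub>v x i k) - Eh i *\<^sub>v (K *\<^sub>v \<eta> i k)"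
    and obs_dyn: "\<And>i k. i < N \<Longrightarrow>
      xh i (Suc k) = Ac *\<^sub>v xh i k
        + H *\<^sub>v (zeta_bar N roots a p (\<lambda>j. C j *\<^sub>v x j k) (Cr *\<^sub>v xr k) i - Cc *\<^sub>v xh i k)
        - Bc *\<^sub>v (K *\<^sub>v zeta_check N roots a nr (\<lambda>j. \<eta> j k) i)"
    and eta_dyn: "\<And>i k. i < N \<Longrightarrow>
      \<eta> i (Suc k) = (Ac - Bc * K) *\<^sub>v \<eta> i k + Ac *\<^sub>v xh i k
        - Ac *\<^sub>v zeta_check N roots a nr (\<lambda>j. \<eta> j k) i"
  shows "\<forall>i < N. \<forall>l < p. (\<lambda>k. (C i *\<^sub>v x i k - Cr *\<^sub>v xr k) $ l) \<longlonglongrightarrow> 0"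
proof (intro allI impI)
  fix i l assume i: "i < N" and l: "l < p"
  have Ac_eigs: "cmod e \<le> 1" if "eigenvalue (cmat Ac) e" for e
    using chk_eigs exo_eigs that unfolding eigs_extend_by_zeros_def by fastforce
  obtain xc where xc: "\<And>k. xc k \<in> carrier_vec nr" "\<And>k. xc (Suc k) = Ac *\<^sub>v xc k"
    "\<And>k. Cr *\<^sub>v xr k = Cc *\<^sub>v xc k"
    using reproduces_outputs_trajectory[where xr = xr, OF chk_reproduces exo_dims(1) chk_dims(1)
        exo_traj_dims exo_dyn] by blast
  have "\<forall>j. j < N \<longrightarrow> (\<exists>xb d. internal_model_trajectory Ac Bc Cc K (\<eta> j) (\<lambda>k. C j *\<^sub>v x j k) xb d)"
  proof (intro allI impI)
    fix j assume j: "j < N"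
    show "\<exists>xb d. internal_model_trajectory Ac Bc Cc K (\<eta> j) (\<lambda>k. C j *\<^sub>v x j k) xb d"
      using agent_dims[OF j] pre_dims[OF j] traj_dims[OF j]
      by (intro precompensated_agent_internal_model[where x = "x j" and \<xi> = "\<xi> j" and \<eta> = "\<eta> j",
            OF pre_form[OF j] _ _ _ _ _ _ _ _ _ pre_As_stable[OF j] chk_dims(1,2) KH_dims(1) _ _ _
            agent_dyn[OF j] pre_dyn[OF j]]) blast+
  qed
  then obtain xb d where agents:
    "\<And>j. j < N \<Longrightarrow> internal_model_trajectory Ac Bc Cc K (\<eta> j) (\<lambda>k. C j *\<^sub>v x j k) (xb j) (d j)"
    unfolding choice_iff' by blast
  have states: "\<eta> j k \<in> carrier_vec nr \<and> xh j k \<in> carrier_vec nr" if "j < N" for j k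
    using traj_dims[OF that] by blast
  interpret internal_model_network N roots a nr p Ac Bc Cc K H xb \<eta> xh d "\<lambda>j k. C j *\<^sub>v x j k" xc
    "\<lambda>k. Cr *\<^sub>v xr k"
    by unfold_locales (fact graph chk_dims KH_dims Ac_eigs K_stab H_stab agents states xc obs_dyn eta_dyn)+
  show "(\<lambda>k. (C i *\<^sub>v x i k - Cr *\<^sub>v xr k) $ l) \<longlonglongrightarrow> 0"
    using output_error_tendsto_zero[OF i] l unfolding tendsto_zero_vec_def by simp
qed

end
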